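(* Let $m\geq 3$ and $n\geq 2$, and let $L_{m,n}$ be the lollipop graph. Then $\mathrm{ldim}_f(L_{m,n})=\frac{m}{2}$.
   Context: The lollipop graph $L_{m,n}$ is obtained from a complete graph $K_m$ and a path $P_n$ (on $n$ vertices), disjoint, by adding one edge joining a vertex of $K_m$ to an end vertex of $P_n$. For a connected graph $G$ and edge $uv$, $L(uv)=\{x\in V(G): d(u,x)\neq d(v,x)\}$ ($d$ the shortest-path distance). A function $f:V(G)\to[0,1]$ is a local resolving function if $\sum_{x\in L(uv)}f(x)\geq 1$ for every edge $uv$; $\mathrm{ldim}_f(G)$ is the minimum of $\sum_{v}f(v)$ over all local resolving functions. *)

theory Defs
  imports Complex_Main
begin

text \<open>A (simple) graph is given by a vertex set V and a symmetric irreflexive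
adjacency relation E on V.\<close>

definition has_walk :: "('a \<Rightarrow> 'a \<Rightarrow> bool) \<Rightarrow> 'a \<Rightarrow> 'a \<Rightarrow> nat \<Rightarrow> bool" where
  "has_walk E u v k \<longleftrightarrow> (\<exists>p. length p = Suc k \<and> hd p = u \<and> last p = v \<and>
      (\<forall>i<k. E (p ! i) (p ! Suc i)))"

text \<open>Shortest-path distance (for connected graphs).\<close>
definition gdist :: "('a \<Rightarrow> 'a \<Rightarrow> bool) \<Rightarrow> 'a \<Rightarrow> 'a \<Rightarrow> nat" where
  "gdist E u v = (LEAST k. has_walk E u v k)"

definition Lset :: "'a set \<Rightarrow> ('a \<Rightarrow> 'a \<Rightarrow> bool) \<Rightarrow> 'a \<Rightarrow> 'a \<Rightarrow> 'a set" where
  "Lset V E u v = {x \<in> V. gdist E u x \<noteq> gdist E v x}"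

definition local_resolving_function ::
  "'a set \<Rightarrow> ('a \<Rightarrow> 'a \<Rightarrow> bool) \<Rightarrow> ('a \<Rightarrow> real) \<Rightarrow> bool" where
  "local_resolving_function V E f \<longleftrightarrow>
     (\<forall>x\<in>V. 0 \<le> f x \<and> f x \<le> 1) \<and>
     (\<forall>u\<in>V. \<forall>v\<in>V. E u v \<longrightarrow> (\<Sum>x\<in>Lset V E u v. f x) \<ge> 1)"

definition ldim_f :: "'a set \<Rightarrow> ('a \<Rightarrow> 'a \<Rightarrow> bool) \<Rightarrow> real" where
  "ldim_f V E = Inf {(\<Sum>x\<in>V. f x) | f. local_resolving_function V E f}"

text \<open>Lollipop graph L_{m,n}: vertices 0..m+n-1; 0..m-1 form K_m,
  m..m+n-1 form the path P_n, and vertex m-1 of K_m is joined to the end m of the path.\<close>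
definition lollipop_V :: "nat \<Rightarrow> nat \<Rightarrow> nat set" where
  "lollipop_V m n = {0..<m+n}"

definition lollipop_E :: "nat \<Rightarrow> nat \<Rightarrow> nat \<Rightarrow> nat \<Rightarrow> bool" where
  "lollipop_E m n x y \<longleftrightarrow> x \<noteq> y \<and> x < m + n \<and> y < m + n \<and>
     ((x < m \<and> y < m) \<or> (max x y \<ge> m \<and> (x = y + 1 \<or> y = x + 1)))"

end

theory Submission
  imports Defs "HOL-Combinatorics.Transposition"
begin

text \<open>Two clique vertices u, v other than the attachment vertex m - 1 are twins: the
transposition of u and v is an automorphism, so only u and v resolve the edge uv, and a
fractional resolving function needs f u + f v \<ge> 1 for all such pairs. Hence all of them
but one, u0, carry weight at least 1/2. The edge from u0 to m - 1 is resolved only by u0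
and by the tail {m - 1, ..., m + n - 1}, which therefore carries at least 1 - f u0 in total;
this gives the lower bound (m - 2)/2 + 1 = m/2. Conversely, weight 1/2 on each clique vertex
resolves every clique edge by its two endpoints and every path edge by the clique vertices 0
and 1, whose distances to the two ends of a path edge differ by one.\<close>

lemma has_walk_refl: "has_walk E a a 0"
  unfolding has_walk_def by (intro exI[of _ "[a]"]) auto

lemma has_walk_Cons:
  assumes "E a b" "has_walk E b c k"
  shows "has_walk E a c (Suc k)"
proof -
  obtain p where p: "length p = Suc k" "hd p = b" "last p = c" "\<forall>i<k. E (p ! i) (p ! Suc i)"
    using assms(2) unfolding has_walk_def by blast
  have "p \<noteq> []" using p(1) by auto
  then have "\<forall>i<Suc k. E ((a # p) ! i) ((a # p) ! Suc i)"
    using p assms(1) by (auto simp: hd_conv_nth nth_Cons split: nat.split)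
  then show ?thesis
    unfolding has_walk_def using p \<open>p \<noteq> []\<close> by (intro exI[of _ "a # p"]) auto
qed

lemma has_walk_0_eq: "has_walk E a b 0 \<Longrightarrow> a = b"
  unfolding has_walk_def by (auto simp: length_Suc_conv)

lemma has_walk_map:
  assumes "has_walk E a b k" "\<And>y z. E y z \<Longrightarrow> E (\<sigma> y) (\<sigma> z)"
  shows "has_walk E (\<sigma> a) (\<sigma> b) k"
proof -
  obtain p where p: "length p = Suc k" "hd p = a" "last p = b" "\<forall>i<k. E (p ! i) (p ! Suc i)"
    using assms(1) unfolding has_walk_def by blast
  then have "p \<noteq> []" by auto
  then show ?thesis
    unfolding has_walk_def using p assms(2)
    by (intro exI[of _ "map \<sigma> p"]) (auto simp: hd_map last_map)
qed

lemma has_walk_potential_le: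
  assumes "has_walk E a b k" "\<And>y z. E y z \<Longrightarrow> \<phi> y \<le> \<phi> z + (1::nat)"
  shows "\<phi> a \<le> \<phi> b + k"
proof -
  obtain p where p: "length p = Suc k" "hd p = a" "last p = b" "\<forall>i<k. E (p ! i) (p ! Suc i)"
    using assms(1) unfolding has_walk_def by blast
  have "\<phi> (p ! 0) \<le> \<phi> (p ! i) + i" if "i \<le> k" for i
    using that
  proof (induction i)
    case (Suc i)
    then have "\<phi> (p ! i) \<le> \<phi> (p ! Suc i) + 1" using p(4) assms(2) by simp
    with Suc show ?case by simp
  qed simp
  moreover have "p \<noteq> []" using p(1) by auto
  ultimately show ?thesis
    using p by (metis hd_conv_nth last_conv_nth diff_Suc_1 order_refl)
qed

lemma gdist_le: "has_walk E a b k \<Longrightarrow> gdist E a b \<le> k"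
  unfolding gdist_def by (rule Least_le)

lemma has_walk_gdist: "has_walk E a b k \<Longrightarrow> has_walk E a b (gdist E a b)"
  unfolding gdist_def by (rule LeastI)

lemma gdist_refl [simp]: "gdist E a a = 0"
  using gdist_le[OF has_walk_refl, of E a] by simp

lemma gdist_adjacent:
  assumes "E a b" "a \<noteq> b"
  shows "gdist E a b = 1"
proof -
  have walk: "has_walk E a b 1"
    using has_walk_Cons[OF assms(1) has_walk_refl[of E b]] by simp
  have "gdist E a b \<noteq> 0"
    using has_walk_gdist[OF walk] has_walk_0_eq assms(2) by metis
  with gdist_le[OF walk] show ?thesis by linarith
qed

lemma gdist_involution_invariant:
  assumes "\<And>y z. E y z \<Longrightarrow> E (\<sigma> y) (\<sigma> z)" "\<And>y. \<sigma> (\<sigma> y) = y"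
  shows "gdist E (\<sigma> a) (\<sigma> b) = gdist E a b"
proof -
  have "has_walk E (\<sigma> a) (\<sigma> b) k \<longleftrightarrow> has_walk E a b k" for k
    using has_walk_map[where \<sigma> = \<sigma>] assms by metis
  then have "has_walk E (\<sigma> a) (\<sigma> b) = has_walk E a b" by blast
  then show ?thesis unfolding gdist_def by simp
qed

lemma Lset_commute: "Lset V E u v = Lset V E v u"
  unfolding Lset_def by auto

lemma endpoints_in_Lset:
  assumes "u \<in> V" "v \<in> V" "E u v" "E v u" "u \<noteq> v"
  shows "{u, v} \<subseteq> Lset V E u v"
  using assms gdist_adjacent[of E u v] gdist_adjacent[of E v u] unfolding Lset_def by auto

lemma common_neighbour_notin_Lset:
  assumes "E u x" "E v x" "x \<noteq> u" "x \<noteq> v"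
  shows "x \<notin> Lset V E u v"
  using assms gdist_adjacent[of E u x] gdist_adjacent[of E v x] unfolding Lset_def by auto

lemma Lset_of_twins:
  assumes "\<And>y z. E y z \<Longrightarrow> E (transpose u v y) (transpose u v z)"
  shows "Lset V E u v \<subseteq> {u, v}"
proof
  fix x assume x: "x \<in> Lset V E u v"
  show "x \<in> {u, v}"
  proof (rule ccontr)
    assume "x \<notin> {u, v}"
    then have "gdist E v x = gdist E (transpose u v u) (transpose u v x)" by simp
    also have "\<dots> = gdist E u x" by (rule gdist_involution_invariant) (use assms in auto)
    finally show False using x unfolding Lset_def by simp
  qed
qed

lemma sum_ge_half_card_if_pairwise_ge_1:
  fixes f :: "'a \<Rightarrow> real"
  assumes "finite K" "u0 \<in> K" "\<And>u. u \<in> K \<Longrightarrow> f u0 \<le> f u"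
    and "\<And>u v. u \<in> K \<Longrightarrow> v \<in> K \<Longrightarrow> u \<noteq> v \<Longrightarrow> 1 \<le> f u + f v"
  shows "real (card K - 1) / 2 \<le> (\<Sum>x\<in>K - {u0}. f x)"
proof -
  have "1 / 2 \<le> f u" if "u \<in> K - {u0}" for u
    using assms(2) assms(3)[of u] assms(4)[of u0 u] that by force
  then have "(\<Sum>x\<in>K - {u0}. 1 / 2) \<le> (\<Sum>x\<in>K - {u0}. f x)"
    by (rule sum_mono)
  then show ?thesis using assms(1,2) by simp
qed

lemma ldim_f_eqI:
  assumes "local_resolving_function V E g" "(\<Sum>x\<in>V. g x) = c"
    and "\<And>f. local_resolving_function V E f \<Longrightarrow> c \<le> (\<Sum>x\<in>V. f x)"
  shows "ldim_f V E = c"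
  unfolding ldim_f_def by (rule cInf_eq_minimum) (use assms in auto)

lemma lollipop_E_commute: "lollipop_E m n x y = lollipop_E m n y x"
  unfolding lollipop_E_def by (auto simp: max.commute)

lemma lollipop_E_cases:
  assumes "lollipop_E m n u v"
  obtains "u < m" "v < m" | "m - 1 \<le> u" "v = u + 1" | "m - 1 \<le> v" "u = v + 1"
  using assms unfolding lollipop_E_def by fastforce

lemma lollipop_E_transpose:
  assumes "u < m - 1" "v < m - 1" "lollipop_E m n y z"
  shows "lollipop_E m n (transpose u v y) (transpose u v z)"
proof (cases "y \<in> {u, v} \<or> z \<in> {u, v}")
  case True
  then have "y < m" "z < m" using assms unfolding lollipop_E_def by auto
  then have "transpose u v y < m" "transpose u v z < m"
    using assms(1,2) by (auto simp: transpose_def)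
  moreover have "transpose u v y \<noteq> transpose u v z"
    using assms(3) transpose_eq_imp_eq unfolding lollipop_E_def by metis
  ultimately show ?thesis unfolding lollipop_E_def by auto
next
  case False
  then show ?thesis using assms(3) by simp
qed

lemma lollipop_has_walk_path_to_clique:
  assumes "x < m - 1" "m - 1 + j < m + n"
  shows "has_walk (lollipop_E m n) (m - 1 + j) x (Suc j)"
  using assms(2)
proof (induction j)
  case 0
  have "lollipop_E m n (m - 1) x" using assms unfolding lollipop_E_def by auto
  then show ?case using has_walk_Cons[OF _ has_walk_refl] by simp
next
  case (Suc j)
  have "lollipop_E m n (m - 1 + Suc j) (m - 1 + j)"
    using Suc.prems assms unfolding lollipop_E_def by auto
  with Suc show ?case using has_walk_Cons by simp
qed

lemma lollipop_gdist_path_to_clique: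
  assumes "x < m - 1" "m - 1 + j < m + n"
  shows "gdist (lollipop_E m n) (m - 1 + j) x = Suc j"
proof -
  let ?\<phi> = "\<lambda>y. if y < m - 1 then 0 else y + 2 - m"
  have walk: "has_walk (lollipop_E m n) (m - 1 + j) x (Suc j)"
    using lollipop_has_walk_path_to_clique[OF assms] .
  have potential: "?\<phi> y \<le> ?\<phi> z + 1" if "lollipop_E m n y z" for y z
    using that unfolding lollipop_E_def by auto
  have "?\<phi> (m - 1 + j) \<le> ?\<phi> x + gdist (lollipop_E m n) (m - 1 + j) x"
    by (rule has_walk_potential_le[OF has_walk_gdist[OF walk] potential])
  then have "Suc j \<le> gdist (lollipop_E m n) (m - 1 + j) x" using assms(1) by (cases m) auto
  with gdist_le[OF walk] show ?thesis by linarith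
qed

lemma lollipop_path_edge_in_Lset:
  assumes "x < m - 1" "m - 1 \<le> a" "a + 1 < m + n"
  shows "x \<in> Lset (lollipop_V m n) (lollipop_E m n) a (a + 1)"
proof -
  obtain j where j: "a = m - 1 + j" using assms(2) le_Suc_ex by blast
  have "a + 1 = m - 1 + Suc j" using j by simp
  then show ?thesis
    using assms j lollipop_gdist_path_to_clique[of x m j n] lollipop_gdist_path_to_clique[of x m "Suc j" n]
    unfolding Lset_def lollipop_V_def by auto
qed

lemma lollipop_half_on_clique_resolving:
  assumes "m \<ge> 3"
  shows "local_resolving_function (lollipop_V m n) (lollipop_E m n) (\<lambda>x. if x < m then 1/2 else 0)"
  unfolding local_resolving_function_def
proof (intro conjI ballI impI)
  fix u v assume uv: "u \<in> lollipop_V m n" "v \<in> lollipop_V m n" "lollipop_E m n u v"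
  let ?g = "\<lambda>x. if x < m then 1/2 else 0::real"
  let ?L = "Lset (lollipop_V m n) (lollipop_E m n) u v"
  have sum_mono_L: "sum ?g S \<le> sum ?g ?L" if "S \<subseteq> ?L" for S
    by (rule sum_mono2) (use that in \<open>auto simp: Lset_def lollipop_V_def\<close>)
  have "u \<noteq> v" using uv(3) unfolding lollipop_E_def by simp
  from uv(3) show "1 \<le> sum ?g ?L"
  proof (cases rule: lollipop_E_cases)
    case 1
    have "{u, v} \<subseteq> ?L"
      using endpoints_in_Lset uv \<open>u \<noteq> v\<close> lollipop_E_commute by metis
    then show ?thesis using sum_mono_L[of "{u, v}"] 1 \<open>u \<noteq> v\<close> by simp
  next
    case 2
    then have "{0, 1} \<subseteq> ?L"
      using assms uv(2) lollipop_path_edge_in_Lset[of _ m u n] by (auto simp: lollipop_V_def)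
    then show ?thesis using sum_mono_L[of "{0, 1}"] assms by simp
  next
    case 3
    then have "?L = Lset (lollipop_V m n) (lollipop_E m n) v (v + 1)"
      using Lset_commute by metis
    then have "{0, 1} \<subseteq> ?L"
      using 3 assms uv(1) lollipop_path_edge_in_Lset[of _ m v n] by (auto simp: lollipop_V_def)
    then show ?thesis using sum_mono_L[of "{0, 1}"] assms by simp
  qed
qed simp_all

lemma lollipop_Lset_twins:
  assumes "u < m - 1" "v < m - 1"
  shows "Lset V (lollipop_E m n) u v \<subseteq> {u, v}"
  using assms lollipop_E_transpose[of u m v n] by (intro Lset_of_twins) auto

lemma lollipop_Lset_attachment_edge:
  assumes "u < m - 1"
  shows "Lset (lollipop_V m n) (lollipop_E m n) u (m - 1) \<subseteq> insert u {m - 1..<m + n}"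
proof
  fix x assume x: "x \<in> Lset (lollipop_V m n) (lollipop_E m n) u (m - 1)"
  show "x \<in> insert u {m - 1..<m + n}"
  proof (rule ccontr)
    assume "x \<notin> insert u {m - 1..<m + n}"
    then have "x < m - 1" "x \<noteq> u" using x by (auto simp: Lset_def lollipop_V_def)
    moreover have "lollipop_E m n u x" "lollipop_E m n (m - 1) x"
      using assms calculation by (auto simp: lollipop_E_def)
    ultimately show False
      using x common_neighbour_notin_Lset[of "lollipop_E m n" u x "m - 1"] by simp
  qed
qed

lemma local_resolving_function_sum_ge_1:
  assumes "local_resolving_function V E f" "finite V"
    and "u \<in> V" "v \<in> V" "E u v" "Lset V E u v \<subseteq> S" "S \<subseteq> V"
  shows "1 \<le> (\<Sum>x\<in>S. f x)"
proof -
  have "1 \<le> (\<Sum>x\<in>Lset V E u v. f x)"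
    using assms(1,3-5) unfolding local_resolving_function_def by blast
  also have "\<dots> \<le> (\<Sum>x\<in>S. f x)"
    using assms(1,2,6,7) unfolding local_resolving_function_def
    by (intro sum_mono2) (auto intro: finite_subset)
  finally show ?thesis .
qed

lemma lollipop_resolving_sum_ge:
  assumes m: "m \<ge> 3" and f: "local_resolving_function (lollipop_V m n) (lollipop_E m n) f"
  shows "real m / 2 \<le> (\<Sum>x\<in>lollipop_V m n. f x)"
proof -
  define K T where "K = {0..<m - 1}" and "T = {m - 1..<m + n}"
  have V_split: "lollipop_V m n = K \<union> T" "K \<inter> T = {}" and "finite K" "finite T"
    using m by (auto simp: K_def T_def lollipop_V_def)
  have "finite (lollipop_V m n)" by (simp add: lollipop_V_def)
  note resolved = local_resolving_function_sum_ge_1[OF f this]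
  have clique_edge: "lollipop_E m n u v" if "u < m" "v < m" "u \<noteq> v" for u v
    using that unfolding lollipop_E_def by auto
  have twins: "1 \<le> f u + f v" if "u \<in> K" "v \<in> K" "u \<noteq> v" for u v
  proof -
    have "1 \<le> (\<Sum>x\<in>{u, v}. f x)"
      by (rule resolved[of u v]) (use that lollipop_Lset_twins in \<open>auto simp: K_def lollipop_V_def intro: clique_edge\<close>)
    then show ?thesis using that by simp
  qed
  obtain u0 where u0: "u0 \<in> K" "\<And>u. u \<in> K \<Longrightarrow> f u0 \<le> f u"
    using \<open>finite K\<close> m ex_min_if_finite[of "f ` K"] by (auto simp: K_def not_less)
  have "1 \<le> (\<Sum>x\<in>insert u0 T. f x)"
    by (rule resolved[of u0 "m - 1"])
      (use u0(1) m lollipop_Lset_attachment_edge[of u0 m n] in \<open>auto simp: K_def T_def lollipop_V_def intro: clique_edge\<close>)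
  then have tail: "1 \<le> f u0 + (\<Sum>x\<in>T. f x)"
    using u0(1) V_split(2) \<open>finite T\<close> by (simp add: disjoint_iff)
  have "real (m - 2) / 2 \<le> (\<Sum>x\<in>K - {u0}. f x)"
    using sum_ge_half_card_if_pairwise_ge_1[of K u0 f, OF \<open>finite K\<close> u0 twins] by (simp add: K_def)
  moreover have "(\<Sum>x\<in>lollipop_V m n. f x) = (\<Sum>x\<in>K - {u0}. f x) + (f u0 + (\<Sum>x\<in>T. f x))"
    using V_split \<open>finite K\<close> \<open>finite T\<close> u0(1) by (simp add: sum.union_disjoint sum.remove)
  moreover have "real (m - 2) / 2 + 1 = real m / 2" using m by (simp add: of_nat_diff field_simps)
  ultimately show ?thesis using tail by linarith
qed

theorem corollary2p6:
  fixes m n :: nat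
  assumes "m \<ge> 3" and "n \<ge> 2"
  shows "ldim_f (lollipop_V m n) (lollipop_E m n) = real m / 2"
proof (rule ldim_f_eqI)
  show "local_resolving_function (lollipop_V m n) (lollipop_E m n) (\<lambda>x. if x < m then 1/2 else 0)"
    using lollipop_half_on_clique_resolving[OF assms(1)] .
  have "(\<Sum>x\<in>lollipop_V m n. if x < m then 1/2 else 0) = (\<Sum>x\<in>{0..<m}. 1/2 :: real)"
    unfolding lollipop_V_def by (rule sum.mono_neutral_cong_right) auto
  then show "(\<Sum>x\<in>lollipop_V m n. if x < m then 1/2 else 0) = real m / 2" by simp
qed (rule lollipop_resolving_sum_ge[OF assms(1)])

end
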